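(* Let $\mathcal{R}$ be a fusion ring with basis $\{x_1=1,\ldots,x_m\}$ and fusion matrices $M_j$. Then the primary $2$-matrix is positive semidefinite: \[ \sum_{j=1}^m M_j\otimes M_j\geq0. \]
   Context: A fusion ring is a ring $\mathcal{R}$ which is a free $\mathbb{Z}$-module with a finite basis $\{x_1=1,\ldots,x_m\}$ such that $x_ix_j=\sum_k N_{ij}^k x_k$ with $N_{ij}^k\in\mathbb{N}$; there is an involution $i\mapsto i^*$ whose $\mathbb{Z}$-linear extension is an anti-involution of $\mathcal{R}$; and the coefficient of $x_1$ in $x_ix_j$ equals $\delta_{i,j^*}$. The fusion matrix of $x_j$ is $(M_j)_{k,i}=N_{ji}^k$; $\otimes$ is the Kronecker product. *)

theory Defs
  imports "HOL-Analysis.Analysis"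
begin

text \<open>A fusion ring with finite basis indexed by the finite type 'b, unit basis element
  indexed by e, structure constants N i j k (coefficient of x_k in x_i x_j) and
  involution d on indices.\<close>

definition fusion_ring :: "('b::finite \<Rightarrow> 'b \<Rightarrow> 'b \<Rightarrow> nat) \<Rightarrow> 'b \<Rightarrow> ('b \<Rightarrow> 'b) \<Rightarrow> bool" where
  "fusion_ring N e d \<longleftrightarrow>
     \<comment> \<open>associativity of the multiplication\<close>
     (\<forall>i j k t. (\<Sum>l\<in>UNIV. N i j l * N l k t) = (\<Sum>l\<in>UNIV. N j k l * N i l t)) \<and>
     \<comment> \<open>x_e is the unit\<close>
     (\<forall>i k. N e i k = (if k = i then 1 else 0)) \<and>
     (\<forall>i k. N i e k = (if k = i then 1 else 0)) \<and>
     \<comment> \<open>d is an involution whose linear extension is an anti-involution\<close>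
     (\<forall>i. d (d i) = i) \<and>
     (\<forall>i j k. N (d j) (d i) (d k) = N i j k) \<and>
     \<comment> \<open>coefficient of the unit in x_i x_j is delta(i, j*)\<close>
     (\<forall>i j. N i j e = (if i = d j then 1 else 0))"

definition fusion_matrix :: "('b::finite \<Rightarrow> 'b \<Rightarrow> 'b \<Rightarrow> nat) \<Rightarrow> 'b \<Rightarrow> real^'b^'b" where
  "fusion_matrix N j = (\<chi> k i. real (N j i k))"

definition kron :: "real^'n::finite^'m::finite \<Rightarrow> real^'q::finite^'p::finite \<Rightarrow> real^('n\<times>'q)^('m\<times>'p)" where
  "kron A B = (\<chi> r c. A$(fst r)$(fst c) * B$(snd r)$(snd c))"

definition psd :: "real^'n::finite^'n \<Rightarrow> bool" where
  "psd A \<longleftrightarrow> transpose A = A \<and> (\<forall>v. 0 \<le> v \<bullet> (A *v v))"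

end

theory Submission
  imports Defs
begin

text \<open>Frobenius reciprocity N_{ji}^k = N_{k i*}^j together with associativity turns the entry
  of sum_j M_j (x) M_j at row (k, k') and column (i, i') into sum_l N_{k'* k}^l N_{i'* i}^l.
  So the matrix is the Gram matrix B^T B of B_{l,(k,k')} = N_{k'* k}^l, hence positive
  semidefinite.\<close>

lemma psd_transpose_mult_self: "psd (transpose B ** B)"
  for B :: "real^'n::finite^'m::finite"
proof -
  have "v \<bullet> ((transpose B ** B) *v v) = (B *v v) \<bullet> (B *v v)" for v
  proof -
    have "v \<bullet> ((transpose B ** B) *v v) = v \<bullet> ((B *v v) v* B)"
      by (simp flip: matrix_vector_mul_assoc)
    also have "\<dots> = (B *v v) \<bullet> (B *v v)"
      by (subst inner_commute) (rule dot_lmul_matrix)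
    finally show ?thesis .
  qed
  then show ?thesis
    unfolding psd_def by (simp add: matrix_transpose_mul)
qed

lemma fusion_ring_assoc:
  "fusion_ring N e d \<Longrightarrow> (\<Sum>l\<in>UNIV. N i j l * N l k t) = (\<Sum>l\<in>UNIV. N j k l * N i l t)"
  unfolding fusion_ring_def by blast

lemma fusion_ring_dual_dual: "fusion_ring N e d \<Longrightarrow> d (d i) = i"
  unfolding fusion_ring_def by blast

lemma fusion_ring_dual_coeff: "fusion_ring N e d \<Longrightarrow> N (d j) (d i) (d k) = N i j k"
  unfolding fusion_ring_def by blast

lemma fusion_ring_unit_coeff: "fusion_ring N e d \<Longrightarrow> N i j e = (if i = d j then 1 else 0)"
  unfolding fusion_ring_def by blast

lemma fusion_ring_cyclic:
  assumes "fusion_ring N e d"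
  shows "N a b (d c) = N b c (d a)"
proof -
  have "N a b (d c) = (\<Sum>l\<in>UNIV. N a b l * N l c e)"
    by (simp add: fusion_ring_unit_coeff[OF assms] if_distrib cong: if_cong)
  also have "\<dots> = (\<Sum>l\<in>UNIV. N b c l * N a l e)"
    by (rule fusion_ring_assoc[OF assms])
  also have "\<dots> = N b c (d a)"
  proof -
    have "a = d l \<longleftrightarrow> l = d a" for l
      using fusion_ring_dual_dual[OF assms] by metis
    then show ?thesis
      by (simp add: fusion_ring_unit_coeff[OF assms] if_distrib cong: if_cong)
  qed
  finally show ?thesis .
qed

lemma fusion_ring_frobenius:
  assumes "fusion_ring N e d"
  shows "N a b c = N c (d b) a"
proof -
  note dd = fusion_ring_dual_dual[OF assms]
  have "N a b c = N b (d c) (d a)"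
    using fusion_ring_cyclic[OF assms, of a b "d c"] by (simp add: dd)
  also have "\<dots> = N c (d b) a"
    using fusion_ring_dual_coeff[OF assms, of "d b" c a] by (simp add: dd)
  finally show ?thesis .
qed

lemma fusion_ring_sum_mult_fusion_coeffs:
  assumes "fusion_ring N e d"
  shows "(\<Sum>j\<in>UNIV. N j i k * N j i' k') = (\<Sum>l\<in>UNIV. N (d k') k l * N (d i') i l)"
proof -
  note dd = fusion_ring_dual_dual[OF assms]
  have "N j i' k' = N (d k') j (d i')" for j
    using fusion_ring_cyclic[OF assms, of j i' "d k'"] fusion_ring_cyclic[OF assms, of i' "d k'" j]
    by (simp add: dd)
  then have "(\<Sum>j\<in>UNIV. N j i k * N j i' k') = (\<Sum>j\<in>UNIV. N k (d i) j * N (d k') j (d i'))"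
    by (simp add: fusion_ring_frobenius[OF assms, of _ i k])
  also have "\<dots> = (\<Sum>l\<in>UNIV. N (d k') k l * N l (d i) (d i'))"
    by (rule fusion_ring_assoc[OF assms, symmetric])
  also have "\<dots> = (\<Sum>l\<in>UNIV. N (d k') k l * N (d i') i l)"
    by (simp add: fusion_ring_frobenius[OF assms, of _ "d i" "d i'"] dd)
  finally show ?thesis .
qed

theorem mainTheorem16:
  fixes N :: "'b::finite \<Rightarrow> 'b \<Rightarrow> 'b \<Rightarrow> nat" and e :: 'b and d :: "'b \<Rightarrow> 'b"
  assumes "fusion_ring N e d"
  shows "psd (\<Sum>j\<in>UNIV. kron (fusion_matrix N j) (fusion_matrix N j))"
proof -
  define B :: "real^('b \<times> 'b)^'b" where "B = (\<chi> l r. real (N (d (snd r)) (fst r) l))"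
  have "(\<Sum>j\<in>UNIV. kron (fusion_matrix N j) (fusion_matrix N j)) $ r $ c
      = (transpose B ** B) $ r $ c" for r c
  proof -
    have "(\<Sum>j\<in>UNIV. kron (fusion_matrix N j) (fusion_matrix N j)) $ r $ c
        = real (\<Sum>j\<in>UNIV. N j (fst c) (fst r) * N j (snd c) (snd r))"
      by (simp add: sum_component kron_def fusion_matrix_def)
    also have "\<dots> = real (\<Sum>l\<in>UNIV. N (d (snd r)) (fst r) l * N (d (snd c)) (fst c) l)"
      by (subst fusion_ring_sum_mult_fusion_coeffs[OF assms]) (rule refl)
    finally show ?thesis
      by (simp add: B_def matrix_matrix_mult_def transpose_def)
  qed
  then have "(\<Sum>j\<in>UNIV. kron (fusion_matrix N j) (fusion_matrix N j)) = transpose B ** B"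
    by (simp add: vec_eq_iff)
  then show ?thesis
    by (simp add: psd_transpose_mult_self)
qed

end
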